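(* Let $k$ be a positive integer, $a=6k+4$, $t=\frac{a-2}{2}$, $b=a+1$, $c=a+\frac a2$, $S=\{a,b,c\}$, $G=\langle S\rangle$. Let $A_{0,k}=\{0\}$, $B_{0,k}=\emptyset$, and for $i\in[1,t]$ let $A_{i,k}=[ia,\,ia+i]$ and $B_{i,k}=A_{i-1,k}+\{c\}$. Let $C=[(t+1)a,\infty[$ and $H_{11,k}=\bigcup_{i=0}^{t}(A_{i,k}\cup B_{i,k})\cup C$. Then: (1) $x\in G$ if and only if $x=(q+u)a+u\cdot\frac a2+r$ for some $q,r,u\in\mathbb{N}$ with $0\le r\le q$; (2) $G=H_{11,k}$; (3) $A_{i,k}<B_{i,k}$ for $i\in[0,t]$; $B_{i,k}<A_{i+1,k}$ for $i\in[0,t-1]$; $B_{t,k}<C$; (4) $H_{11,k}$ is a $3$-permutation numerical semigroup.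
   Context: $\mathbb{N}=\{0,1,2,\dots\}$. A numerical semigroup is a submonoid $G$ of $(\mathbb{N},+,0)$ with $\mathbb{N}\setminus G$ finite; $\langle S\rangle$ is the submonoid generated by $S$. Writing the elements of a numerical semigroup as $0=g_0<g_1<g_2<\cdots$, it is an $n$-permutation numerical semigroup if it is generated by $\{g_1,\dots,g_n\}$ and for every $k\in\mathbb{N}$ the tuple $(g_{kn+1}\bmod n,\dots,g_{kn+n}\bmod n)$ contains exactly one representative of each residue class mod $n$. Notation: $[u,v]=\{x\in\mathbb{N}:u\le x\le v\}$, $[u,\infty[=\{x\in\mathbb{N}:x\ge u\}$; $X+Y=\{x+y:x\in X,y\in Y\}$; $X<Y$ means $x<y$ for all $x\in X,y\in Y$ (vacuous if one of them is empty). *)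

theory Defs
  imports "HOL-Library.Infinite_Set"
begin

inductive_set gen :: "nat set \<Rightarrow> nat set" for S :: "nat set" where
  gen_zero: "0 \<in> gen S"
| gen_add: "x \<in> gen S \<Longrightarrow> s \<in> S \<Longrightarrow> x + s \<in> gen S"

definition numerical_semigroup :: "nat set \<Rightarrow> bool" where
  "numerical_semigroup G \<longleftrightarrow> 0 \<in> G \<and> (\<forall>x\<in>G. \<forall>y\<in>G. x + y \<in> G) \<and> finite (UNIV - G)"

text \<open>g_i = i-th element (0-indexed, g_0 = 0) of G in increasing order.\<close>
definition elem :: "nat set \<Rightarrow> nat \<Rightarrow> nat" where
  "elem G i = Infinite_Set.enumerate G i"

definition perm_ns :: "nat \<Rightarrow> nat set \<Rightarrow> bool" where
  "perm_ns n G \<longleftrightarrow> numerical_semigroup G \<and> G = gen (elem G ` {1..n}) \<and>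
     (\<forall>k. bij_betw (\<lambda>j. elem G (k*n + j) mod n) {1..n} {..<n})"

definition setplus :: "nat set \<Rightarrow> nat set \<Rightarrow> nat set" where
  "setplus X Y = {x + y | x y. x \<in> X \<and> y \<in> Y}"

definition set_less :: "nat set \<Rightarrow> nat set \<Rightarrow> bool" where
  "set_less X Y \<longleftrightarrow> (\<forall>x\<in>X. \<forall>y\<in>Y. x < y)"

definition aa :: "nat \<Rightarrow> nat" where "aa k = 6*k + 4"
definition tt :: "nat \<Rightarrow> nat" where "tt k = (aa k - 2) div 2"
definition cc :: "nat \<Rightarrow> nat" where "cc k = aa k + aa k div 2"

fun A :: "nat \<Rightarrow> nat \<Rightarrow> nat set" where
  "A k 0 = {0}"
| "A k (Suc j) = {Suc j * aa k .. Suc j * aa k + Suc j}"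

fun B :: "nat \<Rightarrow> nat \<Rightarrow> nat set" where
  "B k 0 = {}"
| "B k (Suc j) = setplus (A k j) {cc k}"

definition C :: "nat \<Rightarrow> nat set" where
  "C k = {(tt k + 1) * aa k ..}"

definition H11 :: "nat \<Rightarrow> nat set" where
  "H11 k = (\<Union>i\<in>{0..tt k}. A k i \<union> B k i) \<union> C k"

end

theory Submission
  imports Defs "HOL-Library.Discrete_Functions"
begin

text \<open>Write \<open>h = a/2 = 3k + 2\<close>. The generators are \<open>2h, 2h + 1, 3h\<close>, and
  \<open>m(2h) + n(2h + 1) + u(3h) = (q + u)2h + uh + r\<close> with \<open>q = m + n\<close>, \<open>r = n \<le> q\<close>.
  Sorting these numbers by the parity of \<open>u\<close> shows that they form a staircase: the blocks
  \<open>A\<^sub>i = [2hi, 2hi + i]\<close> (\<open>u\<close> even) and \<open>B\<^sub>i = [2hi + h, 2hi + h + i)\<close> (\<open>u\<close> odd) for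
  \<open>i < h\<close>, followed by all numbers \<open>\<ge> 2h\<^sup>2\<close>.
  As \<open>A\<^sub>i\<close> and \<open>B\<^sub>i\<close> have \<open>i + 1\<close> and \<open>i\<close> elements, the \<open>n\<close>-th element of the semigroup is
  read off from \<open>n = i\<^sup>2 + j\<close>. Consecutive elements differ by \<open>1\<close> except at block
  boundaries, where the gaps are \<open>h - i\<close> and \<open>h - i + 1\<close>. Such a jump falls inside a triple
  of indices \<open>3m + 1, 3m + 2, 3m + 3\<close> only if \<open>i \<equiv> 1\<close> resp. \<open>i \<equiv> 2 (mod 3)\<close>, so with
  \<open>h \<equiv> 2 (mod 3)\<close> the gap is \<open>\<equiv> 1 (mod 3)\<close> and every triple runs through three
  consecutive residues.\<close>

section \<open>Submonoids generated by a set\<close>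

lemma gen_add_multiple: "x \<in> gen S \<Longrightarrow> s \<in> S \<Longrightarrow> x + n * s \<in> gen S"
proof (induction n arbitrary: x)
  case (Suc n)
  then have "(x + s) + n * s \<in> gen S" by (blast intro: gen.gen_add)
  then show ?case by (simp add: algebra_simps)
qed simp

lemma gen_add_closed: "y \<in> gen S \<Longrightarrow> x \<in> gen S \<Longrightarrow> x + y \<in> gen S"
proof (induction y rule: gen.induct)
  case (gen_add y s)
  then have "(x + y) + s \<in> gen S" by (blast intro: gen.gen_add)
  then show ?case by (simp add: add.assoc)
qed simp

lemma numerical_semigroup_gen:
  "finite (UNIV - gen S) \<Longrightarrow> numerical_semigroup (gen S)"
  unfolding numerical_semigroup_def by (blast intro: gen.gen_zero gen_add_closed)

lemma mem_gen_three_iff: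
  "x \<in> gen {a, b, c} \<longleftrightarrow> (\<exists>m n u. x = m * a + n * b + u * (c::nat))"
proof
  assume "x \<in> gen {a, b, c}"
  then show "\<exists>m n u. x = m * a + n * b + u * c"
  proof (induction x rule: gen.induct)
    case gen_zero
    show ?case by (intro exI[of _ 0]) simp
  next
    case (gen_add x s)
    then obtain m n u where x: "x = m * a + n * b + u * c" by blast
    from \<open>s \<in> {a, b, c}\<close> consider "s = a" | "s = b" | "s = c" by blast
    then show ?case
    proof cases
      case 1
      with x show ?thesis by (intro exI[of _ "Suc m"] exI[of _ n] exI[of _ u]) simp
    next
      case 2
      with x show ?thesis by (intro exI[of _ m] exI[of _ "Suc n"] exI[of _ u]) simp
    next
      case 3
      with x show ?thesis by (intro exI[of _ m] exI[of _ n] exI[of _ "Suc u"]) simp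
    qed
  qed
next
  assume "\<exists>m n u. x = m * a + n * b + u * c"
  then obtain m n u where x: "x = m * a + n * b + u * c" by blast
  have "0 + m * a + n * b + u * c \<in> gen {a, b, c}"
    by (intro gen_add_multiple gen.gen_zero) auto
  then show "x \<in> gen {a, b, c}" using x by simp
qed

lemma mem_gen_iff_normal_form:
  "x \<in> gen {2 * h, 2 * h + 1, 3 * h} \<longleftrightarrow>
    (\<exists>q r u. r \<le> q \<and> x = (q + u) * (2 * h) + u * h + (r::nat))"
proof
  assume "x \<in> gen {2 * h, 2 * h + 1, 3 * h}"
  then obtain m n u where "x = m * (2 * h) + n * (2 * h + 1) + u * (3 * h)"
    by (auto simp: mem_gen_three_iff)
  then show "\<exists>q r u. r \<le> q \<and> x = (q + u) * (2 * h) + u * h + r"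
    by (intro exI[of _ "m + n"] exI[of _ n] exI[of _ u]) (simp add: algebra_simps)
next
  assume "\<exists>q r u. r \<le> q \<and> x = (q + u) * (2 * h) + u * h + r"
  then obtain q r u where "r \<le> q" "x = (q + u) * (2 * h) + u * h + r" by blast
  then have "x = (q - r) * (2 * h) + r * (2 * h + 1) + u * (3 * h)"
    by (simp add: algebra_simps)
  then show "x \<in> gen {2 * h, 2 * h + 1, 3 * h}" by (auto simp: mem_gen_three_iff)
qed

section \<open>The staircase\<close>

definition staircase :: "nat \<Rightarrow> nat set" where
  "staircase h = (\<Union>i<h. {2 * h * i .. 2 * h * i + i} \<union> {2 * h * i + h ..< 2 * h * i + h + i})
    \<union> {2 * h * h ..}"

lemma mem_staircase_iff:
  "x \<in> staircase h \<longleftrightarrow>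
    (\<exists>i<h. \<exists>j\<le>i. x = 2 * h * i + j) \<or> (\<exists>i<h. \<exists>j<i. x = 2 * h * i + h + j) \<or> 2 * h * h \<le> x"
proof -
  have A: "x \<in> {m .. m + i} \<longleftrightarrow> (\<exists>j\<le>i. x = m + j)"
    and B: "x \<in> {m ..< m + i} \<longleftrightarrow> (\<exists>j<i. x = m + j)" for m i :: nat
    by (auto intro!: exI[of _ "x - m"])
  have "x \<in> staircase h \<longleftrightarrow> (\<exists>i<h. x \<in> {2 * h * i .. 2 * h * i + i} \<or>
      x \<in> {2 * h * i + h ..< 2 * h * i + h + i}) \<or> 2 * h * h \<le> x"
    unfolding staircase_def by blast
  then show ?thesis unfolding A B by blast
qed

lemma mem_staircase_imp_normal_form:
  assumes "0 < h" "x \<in> staircase h"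
  obtains q r u where "r \<le> q" "x = (q + u) * (2 * h) + u * h + r"
proof -
  from assms(2) consider (A) i j where "j \<le> i" "x = 2 * h * i + j"
    | (B) i j where "j < i" "x = 2 * h * i + h + j" | (tail) "2 * h * h \<le> x"
    unfolding mem_staircase_iff by blast
  then show ?thesis
  proof cases
    case A
    then show ?thesis by (intro that[of j i 0]) (simp_all add: algebra_simps)
  next
    case B
    then show ?thesis by (intro that[of j "i - 1" 1]) (auto simp: algebra_simps)
  next
    case tail
    define q where "q = x div (2 * h)"
    define s where "s = x mod (2 * h)"
    have x: "x = q * (2 * h) + s" unfolding q_def s_def by (rule div_mult_mod_eq[symmetric])
    have "s < 2 * h" unfolding s_def using assms by simp
    have "h \<le> q" unfolding q_def using div_le_mono[OF tail, of "2 * h"] assms by simp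
    show ?thesis
    proof (cases "s \<le> q")
      case True
      with x show ?thesis by (intro that[of s q 0]) simp_all
    next
      case False
      \<comment> \<open>a remainder \<open>s > q \<ge> h\<close> is brought below \<open>h\<close> by one summand \<open>h\<close>\<close>
      with x \<open>s < 2 * h\<close> \<open>h \<le> q\<close> show ?thesis
        by (intro that[of "s - h" "q - 1" 1]) (auto simp: algebra_simps)
    qed
  qed
qed

lemma normal_form_mem_staircase:
  assumes "r \<le> q"
  shows "(q + u) * (2 * h) + u * h + r \<in> staircase h" (is "?x \<in> _")
proof -
  obtain v where "u = 2 * v \<or> u = 2 * v + 1" by (metis oddE evenE)
  then show ?thesis
  proof
    assume "u = 2 * v"
    then have x: "?x = 2 * h * (q + 3 * v) + r" by (simp add: algebra_simps)
    show ?thesis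
    proof (cases "q + 3 * v < h")
      case True
      with x assms show ?thesis unfolding mem_staircase_iff by auto
    next
      case False
      then have "2 * h * h \<le> 2 * h * (q + 3 * v)" by simp
      with x show ?thesis unfolding mem_staircase_iff by linarith
    qed
  next
    assume "u = 2 * v + 1"
    then have x: "?x = 2 * h * (q + 3 * v + 1) + h + r" by (simp add: algebra_simps)
    show ?thesis
    proof (cases "q + 3 * v + 1 < h")
      case True
      with x assms have "\<exists>i<h. \<exists>j<i. ?x = 2 * h * i + h + j"
        by (intro exI[of _ "q + 3 * v + 1"]) auto
      then show ?thesis unfolding mem_staircase_iff by blast
    next
      case False
      then have "2 * h * h \<le> 2 * h * (q + 3 * v + 1)" by (intro mult_left_mono) auto
      with x show ?thesis unfolding mem_staircase_iff by linarith
    qed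
  qed
qed

lemma staircase_eq_gen:
  assumes "0 < h"
  shows "staircase h = gen {2 * h, 2 * h + 1, 3 * h}"
  unfolding set_eq_iff mem_gen_iff_normal_form
  using mem_staircase_imp_normal_form[OF assms] normal_form_mem_staircase by metis

section \<open>Enumerating the staircase\<close>

text \<open>Indices \<open>i\<^sup>2 .. i\<^sup>2 + i\<close> enumerate the block \<open>[2hi, 2hi + i]\<close>, indices
  \<open>i\<^sup>2 + i + 1 .. i\<^sup>2 + 2i\<close> the block \<open>[2hi + h, 2hi + h + i)\<close>.\<close>

definition staircase_enum :: "nat \<Rightarrow> nat \<Rightarrow> nat" where
  "staircase_enum h n =
    (if h * h \<le> n then 2 * h * h + (n - h * h)
     else let i = floor_sqrt n; j = n - i * i in
       if j \<le> i then 2 * h * i + j else 2 * h * i + h + (j - i - 1))"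

lemma staircase_enum_A_block:
  assumes "i < h" "j \<le> i"
  shows "staircase_enum h (i * i + j) = 2 * h * i + j"
proof -
  have "(i + 1) * (i + 1) \<le> h * h" using assms by (intro mult_le_mono) auto
  then have "\<not> h * h \<le> i * i + j" using assms by (simp add: algebra_simps)
  moreover have "floor_sqrt (i * i + j) = i"
    using assms by (intro floor_sqrt_unique) (auto simp: power2_eq_square algebra_simps)
  ultimately show ?thesis using assms unfolding staircase_enum_def by (simp add: Let_def)
qed

lemma staircase_enum_B_block:
  assumes "i < h" "j < i"
  shows "staircase_enum h (i * i + i + 1 + j) = 2 * h * i + h + j"
proof -
  have "(i + 1) * (i + 1) \<le> h * h" using assms by (intro mult_le_mono) auto
  then have "\<not> h * h \<le> i * i + i + 1 + j" using assms by (simp add: algebra_simps)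
  moreover have "floor_sqrt (i * i + i + 1 + j) = i"
    using assms by (intro floor_sqrt_unique) (auto simp: power2_eq_square algebra_simps)
  ultimately show ?thesis using assms unfolding staircase_enum_def by (simp add: Let_def)
qed

lemma staircase_enum_tail: "staircase_enum h (h * h + j) = 2 * h * h + j"
  unfolding staircase_enum_def by simp

lemma square_index_cases:
  fixes h n :: nat
  obtains (A) i j where "i < h" "j \<le> i" "n = i * i + j"
  | (B) i j where "i < h" "j < i" "n = i * i + i + 1 + j"
  | (tail) "h * h \<le> n"
proof (cases "h * h \<le> n")
  case False
  define i where "i = floor_sqrt n"
  have lower: "i * i \<le> n" and upper: "n < (i + 1) * (i + 1)"
    unfolding i_def using floor_sqrt_power2_le[of n] Suc_floor_sqrt_power2_gt[of n]
    by (simp_all add: power2_eq_square)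
  have "i < h"
  proof (rule ccontr)
    assume "\<not> i < h"
    then have "h * h \<le> i * i" by (simp add: mult_le_mono)
    with lower False show False by simp
  qed
  show ?thesis
  proof (cases "n \<le> i * i + i")
    case True
    with \<open>i < h\<close> lower show ?thesis by (intro A[of i "n - i * i"]) auto
  next
    case False
    with \<open>i < h\<close> lower upper show ?thesis
      by (intro B[of i "n - i * i - i - 1"]) (auto simp: algebra_simps)
  qed
qed

lemma range_staircase_enum: "range (staircase_enum h) = staircase h"
proof (intro set_eqI iffI)
  fix x assume "x \<in> range (staircase_enum h)"
  then obtain n where x: "x = staircase_enum h n" by blast
  show "x \<in> staircase h"
  proof (cases h n rule: square_index_cases)
    case (A i j)
    then show ?thesis using x staircase_enum_A_block unfolding mem_staircase_iff by blast
  next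
    case (B i j)
    then show ?thesis using x staircase_enum_B_block unfolding mem_staircase_iff by blast
  next
    case tail
    then show ?thesis using x unfolding mem_staircase_iff staircase_enum_def by simp
  qed
next
  fix x assume "x \<in> staircase h"
  then consider (A) i j where "i < h" "j \<le> i" "x = 2 * h * i + j"
    | (B) i j where "i < h" "j < i" "x = 2 * h * i + h + j" | (tail) "2 * h * h \<le> x"
    unfolding mem_staircase_iff by blast
  then show "x \<in> range (staircase_enum h)"
  proof cases
    case A
    then show ?thesis using staircase_enum_A_block by (metis rangeI)
  next
    case B
    then show ?thesis using staircase_enum_B_block by (metis rangeI)
  next
    case tail
    then have "x = 2 * h * h + (x - 2 * h * h)" by simp
    then have "x = staircase_enum h (h * h + (x - 2 * h * h))" by (simp only: staircase_enum_tail)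
    then show ?thesis by (rule range_eqI)
  qed
qed

lemma staircase_enum_A_to_B:
  assumes "0 < i" "i < h"
  shows "staircase_enum h (Suc (i * (i + 1))) + i = staircase_enum h (i * (i + 1)) + h"
proof -
  have "staircase_enum h (i * (i + 1)) = 2 * h * i + i"
    using staircase_enum_A_block[of i h i] assms by (simp add: algebra_simps)
  moreover have "staircase_enum h (Suc (i * (i + 1))) = 2 * h * i + h"
    using staircase_enum_B_block[of i h 0] assms by (simp add: algebra_simps)
  ultimately show ?thesis by simp
qed

lemma staircase_enum_B_to_A:
  assumes "0 < i" "i < h"
  shows "staircase_enum h (Suc (i * (i + 2))) + i = staircase_enum h (i * (i + 2)) + (h + 1)"
proof -
  obtain j where i: "i = Suc j" using assms(1) by (cases i) auto
  have "staircase_enum h (i * (i + 2)) = 2 * h * i + h + j"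
    using staircase_enum_B_block[of i h j] assms i by (simp add: algebra_simps)
  moreover have "staircase_enum h (Suc (i * (i + 2))) = 2 * h * (i + 1)"
  proof -
    have Suc_n: "Suc (i * (i + 2)) = (i + 1) * (i + 1) + 0" by (simp add: algebra_simps)
    show ?thesis
    proof (cases "i + 1 < h")
      case True
      then show ?thesis unfolding Suc_n using staircase_enum_A_block[of "i + 1" h 0] by simp
    next
      case False
      with assms have "i + 1 = h" by simp
      then show ?thesis unfolding Suc_n using staircase_enum_tail[of h 0] by simp
    qed
  qed
  ultimately show ?thesis using i by simp
qed

lemma staircase_enum_Suc_cases:
  fixes h n :: nat
  obtains (consecutive) "staircase_enum h (Suc n) = Suc (staircase_enum h n)"
  | (first) "n = 0"
  | (A_to_B) i where "0 < i" "i < h" "n = i * (i + 1)"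
  | (B_to_A) i where "0 < i" "i < h" "n = i * (i + 2)"
proof (cases h n rule: square_index_cases)
  case (A i j)
  consider "j < i" | "i = 0" | "j = i" "0 < i" using A by linarith
  then show ?thesis
  proof cases
    case 1
    with A have "Suc n = i * i + Suc j" by simp
    with A 1 have "staircase_enum h (Suc n) = Suc (staircase_enum h n)"
      using staircase_enum_A_block[of i h j] staircase_enum_A_block[of i h "Suc j"] by simp
    then show ?thesis by (rule consecutive)
  next
    case 2
    with A show ?thesis using first by simp
  next
    case 3
    with A show ?thesis using A_to_B[of i] by (simp add: algebra_simps)
  qed
next
  case (B i j)
  show ?thesis
  proof (cases "Suc j < i")
    case True
    with B have "Suc n = i * i + i + 1 + Suc j" by simp
    with B True have "staircase_enum h (Suc n) = Suc (staircase_enum h n)"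
      using staircase_enum_B_block[of i h j] staircase_enum_B_block[of i h "Suc j"] by simp
    then show ?thesis by (rule consecutive)
  next
    case False
    with B have "i = Suc j" by simp
    with B show ?thesis using B_to_A[of i] by (simp add: algebra_simps)
  qed
next
  case tail
  then show ?thesis using consecutive by (simp add: staircase_enum_def)
qed

lemma strict_mono_staircase_enum: "strict_mono (staircase_enum h)"
  unfolding strict_mono_Suc_iff
proof
  fix n
  show "staircase_enum h n < staircase_enum h (Suc n)"
  proof (cases h n rule: staircase_enum_Suc_cases)
    case first
    then show ?thesis by (simp add: staircase_enum_def)
  next
    case (A_to_B i)
    from staircase_enum_A_to_B[OF A_to_B(1,2)] A_to_B(2) show ?thesis
      unfolding A_to_B(3) by linarith
  next
    case (B_to_A i)
    from staircase_enum_B_to_A[OF B_to_A(1,2)] B_to_A(2) show ?thesis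
      unfolding B_to_A(3) by linarith
  qed simp
qed

lemma mod_eq_Suc_mod_of_add_eq:
  fixes x y i j m :: nat
  assumes "x + i = y + j" and "j mod m = Suc i mod m"
  shows "x mod m = Suc y mod m"
proof -
  have "Suc i = m * (Suc i div m) + j mod m" using assms(2) by simp
  moreover have "j = m * (j div m) + j mod m" by simp
  ultimately have "x + m * (Suc i div m) = Suc y + m * (j div m)" using assms(1) by linarith
  then have "(x + m * (Suc i div m)) mod m = (Suc y + m * (j div m)) mod m" by (rule arg_cong)
  then show ?thesis by simp
qed

lemma staircase_enum_Suc_mod_3:
  assumes "h mod 3 = 2" "\<not> 3 dvd n"
  shows "staircase_enum h (Suc n) mod 3 = Suc (staircase_enum h n) mod 3"
proof (cases h n rule: staircase_enum_Suc_cases)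
  case (A_to_B i)
  from assms(2) have "\<not> 3 dvd i * (i + 1)" unfolding A_to_B(3) .
  then have "\<not> 3 dvd i" "\<not> 3 dvd (i + 1)" by (meson dvd_mult dvd_mult2)+
  with assms(1) have "h mod 3 = Suc i mod 3" by presburger
  with staircase_enum_A_to_B[OF A_to_B(1,2)] show ?thesis
    unfolding A_to_B(3) by (rule mod_eq_Suc_mod_of_add_eq)
next
  case (B_to_A i)
  from assms(2) have "\<not> 3 dvd i * (i + 2)" unfolding B_to_A(3) .
  then have "\<not> 3 dvd i" "\<not> 3 dvd (i + 2)" by (meson dvd_mult dvd_mult2)+
  with assms(1) have "(h + 1) mod 3 = Suc i mod 3" by presburger
  with staircase_enum_B_to_A[OF B_to_A(1,2)] show ?thesis
    unfolding B_to_A(3) by (rule mod_eq_Suc_mod_of_add_eq)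
qed (use assms in simp_all)

lemma strict_mono_le_if_range_subset:
  fixes f g :: "nat \<Rightarrow> nat"
  assumes "strict_mono f" "strict_mono g" "range f \<subseteq> range g" "\<forall>m<n. f m = g m"
  shows "g n \<le> f n"
proof -
  obtain m where m: "f n = g m" using assms(3) by blast
  have "n \<le> m"
  proof (rule ccontr)
    assume "\<not> n \<le> m"
    with assms(1) have "f m < f n" by (simp add: strict_mono_less)
    with m assms(4) \<open>\<not> n \<le> m\<close> show False by simp
  qed
  with assms(2) m show ?thesis by (simp add: strict_mono_less_eq)
qed

lemma enumerate_range_strict_mono:
  fixes f :: "nat \<Rightarrow> nat"
  assumes "strict_mono f"
  shows "enumerate (range f) = f"
proof
  fix n
  have "infinite (range f)"
    using assms by (simp add: range_inj_infinite strict_mono_imp_inj_on)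
  then have e: "strict_mono (enumerate (range f))" "range (enumerate (range f)) = range f"
    by (simp_all add: strict_mono_enumerate range_enumerate)
  show "enumerate (range f) n = f n"
  proof (induction n rule: less_induct)
    case (less n)
    have "enumerate (range f) n \<le> f n"
      using assms e less.IH by (intro strict_mono_le_if_range_subset) auto
    moreover have "f n \<le> enumerate (range f) n"
      using assms e less.IH by (intro strict_mono_le_if_range_subset) auto
    ultimately show ?case by (rule antisym)
  qed
qed

lemma elem_staircase: "elem (staircase h) = staircase_enum h"
  unfolding elem_def range_staircase_enum[symmetric]
  by (rule enumerate_range_strict_mono[OF strict_mono_staircase_enum])

lemma bij_betw_mod_3_of_Suc_mod:
  fixes g :: "nat \<Rightarrow> nat"
  assumes "g 2 mod 3 = Suc (g 1) mod 3" "g 3 mod 3 = Suc (g 2) mod 3"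
  shows "bij_betw (\<lambda>j. g j mod 3) {1..3} {..<3}"
proof -
  define r where "r = g 1 mod 3"
  have g2: "g 2 mod 3 = Suc r mod 3" using assms(1) unfolding r_def by (simp add: mod_Suc_eq)
  have g3: "g 3 mod 3 = Suc (Suc r) mod 3" using assms(2) g2 by (metis mod_Suc_eq)
  have "r < 3" unfolding r_def by simp
  then consider "r = 0" | "r = 1" | "r = 2" by linarith
  then have "{r, Suc r mod 3, Suc (Suc r) mod 3} = {..<3}" by cases auto
  moreover have "{1..3::nat} = {1, 2, 3}" by auto
  ultimately have img: "(\<lambda>j. g j mod 3) ` {1..3} = {..<3}" using g2 g3 unfolding r_def by simp
  then have "inj_on (\<lambda>j. g j mod 3) {1..3}" by (intro eq_card_imp_inj_on) simp_all
  with img show ?thesis unfolding bij_betw_def by simp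
qed

lemma perm_ns_3_staircase:
  assumes "h mod 3 = 2"
  shows "perm_ns 3 (staircase h)"
proof -
  have "1 < h" using assms by presburger
  have gens: "elem (staircase h) ` {1..3} = {2 * h, 2 * h + 1, 3 * h}"
  proof -
    have "staircase_enum h 1 = 2 * h" "staircase_enum h 2 = 2 * h + 1" "staircase_enum h 3 = 3 * h"
      using staircase_enum_A_block[of 1 h 0] staircase_enum_A_block[of 1 h 1]
        staircase_enum_B_block[of 1 h 0] \<open>1 < h\<close> by (simp_all add: numeral_2_eq_2 numeral_3_eq_3)
    moreover have "{1..3::nat} = {1, 2, 3}" by auto
    ultimately show ?thesis by (simp add: elem_staircase)
  qed
  have "UNIV - staircase h \<subseteq> {..<2 * h * h}" by (auto simp: mem_staircase_iff)
  then have "numerical_semigroup (staircase h)"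
    using \<open>1 < h\<close> by (simp add: staircase_eq_gen numerical_semigroup_gen finite_subset)
  moreover have "bij_betw (\<lambda>j. elem (staircase h) (m * 3 + j) mod 3) {1..3} {..<3}" for m
  proof (rule bij_betw_mod_3_of_Suc_mod)
    have "\<not> 3 dvd m * 3 + 1" "\<not> 3 dvd m * 3 + 2" by presburger+
    note Suc_mod = staircase_enum_Suc_mod_3[OF assms this(1)] staircase_enum_Suc_mod_3[OF assms this(2)]
    have "m * 3 + 2 = Suc (m * 3 + 1)" by simp
    with Suc_mod(1)
    show "elem (staircase h) (m * 3 + 2) mod 3 = Suc (elem (staircase h) (m * 3 + 1)) mod 3"
      by (simp only: elem_staircase)
    have "m * 3 + 3 = Suc (m * 3 + 2)" by simp
    with Suc_mod(2)
    show "elem (staircase h) (m * 3 + 3) mod 3 = Suc (elem (staircase h) (m * 3 + 2)) mod 3"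
      by (simp only: elem_staircase)
  qed
  ultimately show ?thesis
    unfolding perm_ns_def using gens \<open>1 < h\<close> by (simp add: staircase_eq_gen)
qed

lemma A_eq_atLeastAtMost: "A k i = {i * aa k .. i * aa k + i}"
  by (cases i) auto

lemma setplus_singleton: "setplus X {c} = (\<lambda>x. x + c) ` X"
  unfolding setplus_def by blast

lemma B_eq_atLeastLessThan: "B k i = {i * aa k + aa k div 2 ..< i * aa k + aa k div 2 + i}"
  by (cases i) (auto simp: setplus_singleton A_eq_atLeastAtMost cc_def aa_def)

lemma aa_eq: "aa k = 2 * (3 * k + 2)"
  by (simp add: aa_def)

lemma tt_eq: "tt k = 3 * k + 1"
  by (simp add: tt_def aa_def)

lemma H11_eq_staircase: "H11 k = staircase (3 * k + 2)"
proof -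
  have "{0..tt k} = {..<3 * k + 2}" by (auto simp: tt_eq)
  then show ?thesis
    unfolding H11_def staircase_def A_eq_atLeastAtMost B_eq_atLeastLessThan C_def tt_eq aa_eq by (simp add: ac_simps)
qed

lemma set_less_A_B: "i < aa k div 2 \<Longrightarrow> set_less (A k i) (B k i)"
  by (auto simp: set_less_def A_eq_atLeastAtMost B_eq_atLeastLessThan)

lemma set_less_B_A_Suc: "i \<le> aa k div 2 \<Longrightarrow> set_less (B k i) (A k (i + 1))"
  by (auto simp: set_less_def A_eq_atLeastAtMost B_eq_atLeastLessThan)

lemma set_less_B_C: "set_less (B k (tt k)) (C k)"
  by (auto simp: set_less_def B_eq_atLeastLessThan C_def tt_eq aa_eq)

theorem lemma4p11:
  fixes k :: nat
  assumes "k > 0"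
  defines "a \<equiv> 6*k + 4"
  defines "t \<equiv> (a - 2) div 2"
  defines "b \<equiv> a + 1"
  defines "c \<equiv> a + a div 2"
  defines "S \<equiv> {a, b, c}"
  defines "G \<equiv> gen S"
  shows "(\<forall>x. x \<in> G \<longleftrightarrow> (\<exists>q r u. r \<le> q \<and> x = (q + u) * a + u * (a div 2) + r))
    \<and> G = H11 k
    \<and> (\<forall>i\<in>{0..t}. set_less (A k i) (B k i))
    \<and> (\<forall>i\<in>{0..t-1}. set_less (B k i) (A k (i + 1)))
    \<and> set_less (B k t) (C k)
    \<and> perm_ns 3 (H11 k)"
proof -
  define h where "h = 3 * k + 2"
  have a: "a = 2 * h" "a div 2 = h" "aa k div 2 = h" and t: "t = tt k" "t < h"
    unfolding a_def h_def t_def aa_def tt_def by simp_all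
  have "h mod 3 = 2" unfolding h_def by presburger
  have G: "G = gen {2 * h, 2 * h + 1, 3 * h}"
    unfolding G_def S_def b_def c_def a by (simp add: algebra_simps)
  also have "\<dots> = staircase h" using \<open>h mod 3 = 2\<close> by (simp add: staircase_eq_gen)
  also have "\<dots> = H11 k" unfolding h_def by (rule H11_eq_staircase[symmetric])
  finally have "G = H11 k" .
  moreover have "x \<in> G \<longleftrightarrow> (\<exists>q r u. r \<le> q \<and> x = (q + u) * a + u * (a div 2) + r)" for x
    unfolding G a(2) unfolding a(1) by (rule mem_gen_iff_normal_form)
  moreover have "set_less (A k i) (B k i)" if "i \<in> {0..t}" for i
    using that a t by (intro set_less_A_B) simp
  moreover have "set_less (B k i) (A k (i + 1))" if "i \<in> {0..t - 1}" for i
    using that a t by (intro set_less_B_A_Suc) simp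
  moreover have "set_less (B k t) (C k)" unfolding t by (rule set_less_B_C)
  moreover have "perm_ns 3 (H11 k)"
    using \<open>h mod 3 = 2\<close> perm_ns_3_staircase unfolding h_def H11_eq_staircase by blast
  ultimately show ?thesis by blast
qed

end
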